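(* In the setting described in the context, assume $G$ satisfies Condition 1, and let $U=\max_{i}x_i(0)$ and $u=\min_i x_i(0)$, the max and min over non-faulty agents. Then for every non-faulty agent $i$ and every $t\ge1$, $$|y(t)-x_i(t)|\le(n-\phi)\max\{|u|,|U|\}\gamma^{\lceil t/\nu\rceil}+(n-\phi)L\sum_{r=1}^{t-1}\alpha(r-1)\gamma^{\lceil (t-r)/\nu\rceil}+2\alpha(t-1)L,$$ where the sum is $0$ when $t=1$.
   Context: A synchronous system of $n$ agents communicates over a directed graph $G=(\mathcal{V},\mathcal{E})$, $\mathcal{V}=\{1,\dots,n\}$, without self-loops; $N_i^-=\{j:(j,i)\in\mathcal{E}\}$. At most $f$ agents are Byzantine faulty (may send arbitrary, possibly inconsistent values); $\mathcal{F}$ is the set of faulty agents, $\phi=|\mathcal{F}|\le f$, non-faulty agents indexed $1,\dots,n-\phi$. Assignment matrix $\mathbf{A}\in\mathbb{R}^{k\times n}$: nonnegative entries, columns summing to $1$; agent $i$ holds $g_i=\sum_{j=1}^k\mathbf{A}_{ji}h_j$ for admissible (convex, $L$-Lipschitz, nonempty compact argmin) $h_1,\dots,h_k:\mathbb{R}\to\mathbb{R}$. Sparsity parameter $sp(\mathbf{A})$: smallest $s$ such that the sum of any $s$ columns of $\mathbf{A}$ is component-wise positive ($n+1$ if the sum of all columns is not). Reduced graph w.r.t. $\mathcal{F}$: subgraph of $G$ obtained by removing the nodes of $\mathcal{F}$ with their edges and then up to $f$ additional incoming edges at each remaining node; $R_{\mathcal{F}}$ the set of reduced graphs, $\tau=|R_{\mathcal{F}}|$.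 Source component: set of nodes each having a directed path to every other node of the graph. Condition 1: for every $\mathcal{F}'\subseteq\mathcal{V}$ with $|\mathcal{F}'|\le f$, every reduced graph w.r.t. $\mathcal{F}'$ has a source component with at least $\max\{f+1,sp(\mathbf{A})\}$ nodes. Step sizes: $\alpha(t)\ge0$ with $\alpha(t+1)\le\alpha(t)$, $\sum_t\alpha(t)=\infty$, $\sum_t\alpha^2(t)<\infty$. Algorithm 2: arbitrary $x_i(0)$; in iteration $t\ge1$ non-faulty agent $i$ sends $x_i(t-1)$ to all out-neighbors, receives $|N_i^-|$ values (default for missing), discards the $f$ smallest and $f$ largest, lets $N_i^*(t)$ be the senders of the remaining values with values $w_j$, sets $w_i=x_i(t-1)$, and updates $x_i(t)=\frac{1}{|N_i^*(t)|+1}\sum_{j\in\{i\}\cup N_i^*(t)}w_j-\alpha(t-1)d_i(t-1)$, $d_i(t-1)$ a subgradient of $g_i$ at $x_i(t-1)$. Known facts: with $\mathbf{x}(t)$ the non-faulty states and $\mathbf{d}(t)=(d_1(t),\dots,d_{n-\phi}(t))$, $\mathbf{x}(t+1)=\mathbf{M}(t)\mathbf{x}(t)-\alpha(t)\mathbf{d}(t)$ with row-stochastic $\mathbf{M}(t)$, and there is $0<\beta<1$ with $\mathbf{M}(t)\ge\beta\mathbf{H}(t)$ entrywise for the adjacency matrix $\mathbf{H}(t)$ (including diagonal ones) of some reduced graph in $R_{\mathcal{F}}$. Let $\Phi(t,r)=\mathbf{M}(t)\cdots\mathbf{M}(r)$ for $t\ge r$, $\Phi(t,t+1)=I$, $\nu=\tau(n-\phi)$,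 $\gamma=1-\beta^\nu$. Under Condition 1, for each $r$, $\lim_{t\to\infty}\Phi(t,r)=\mathbf{1}\pi(r)$ for a stochastic row vector $\pi(r)$, and $|\Phi_{ij}(t,r)-\pi_j(r)|\le\gamma^{\lceil (t-r+1)/\nu\rceil}$ for all $t\ge r$. Define $y(t)=\sum_{j=1}^{n-\phi}\pi_j(0)x_j(0)-\sum_{r=1}^{t}\alpha(r-1)\sum_{j=1}^{n-\phi}\pi_j(r)d_j(r-1)$. *)

theory Defs
  imports "HOL-Analysis.Analysis"
begin

text \<open>Non-faulty agents are indexed 0,...,m-1 with m = n - phi. A matrix over them is a
function nat => nat => real, used only on indices below m.\<close>

text \<open>Transition matrix product: mprod M m r k = M(r+k-1) * ... * M(r) (k factors),
so that Phi(t,r) = mprod M m r (t+1-r) for t+1 >= r, and Phi(r-1,r) = I.\<close>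
fun mprod :: "(nat \<Rightarrow> nat \<Rightarrow> nat \<Rightarrow> real) \<Rightarrow> nat \<Rightarrow> nat \<Rightarrow> nat \<Rightarrow> nat \<Rightarrow> nat \<Rightarrow> real" where
  "mprod M m r 0 = (\<lambda>i j. if i = j then 1 else 0)"
| "mprod M m r (Suc k) = (\<lambda>i j. \<Sum>l<m. M (r + k) i l * mprod M m r k l j)"

definition Phi :: "(nat \<Rightarrow> nat \<Rightarrow> nat \<Rightarrow> real) \<Rightarrow> nat \<Rightarrow> nat \<Rightarrow> nat \<Rightarrow> nat \<Rightarrow> nat \<Rightarrow> real" where
  "Phi M m t r = mprod M m r (t + 1 - r)"

definition lipschitz_with :: "real \<Rightarrow> (real \<Rightarrow> real) \<Rightarrow> bool" where
  "lipschitz_with L h \<longleftrightarrow> (\<forall>a b. \<bar>h a - h b\<bar> \<le> L * \<bar>a - b\<bar>)"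

definition admissible :: "real \<Rightarrow> (real \<Rightarrow> real) \<Rightarrow> bool" where
  "admissible L h \<longleftrightarrow> convex_on UNIV h \<and> lipschitz_with L h \<and>
     {x. \<forall>z. h x \<le> h z} \<noteq> {} \<and> compact {x. \<forall>z. h x \<le> h z}"

definition subgradient_at :: "(real \<Rightarrow> real) \<Rightarrow> real \<Rightarrow> real \<Rightarrow> bool" where
  "subgradient_at g x d \<longleftrightarrow> (\<forall>z. g z \<ge> g x + d * (z - x))"

end

theory Submission
  imports Defs
begin

text \<open>Unrolling the recursion gives
  x(t) = \<Phi>(t-1,0) x(0) - \<Sum>_r \<alpha>(r-1) \<Phi>(t-1,r) d(r-1),
while y(t) is the same expression with every row of \<Phi>(t-1,r) replaced by \<pi>(r).
Hence y(t) - x_i(t) is a sum of terms (\<pi>(r) - row i of \<Phi>(t-1,r)) applied to x(0) or to d(r-1);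
the entries of these differences decay geometrically, the subgradients are bounded by L,
and the last term, where \<Phi>(t-1,t) = I, is bounded crudely by 2 \<alpha>(t-1) L.\<close>

lemma subgradient_abs_le_lipschitz:
  assumes "lipschitz_with L g" "subgradient_at g x d"
  shows "\<bar>d\<bar> \<le> L"
proof -
  have "g (x + 1) \<ge> g x + d" "g (x - 1) \<ge> g x - d"
    using assms(2)[unfolded subgradient_at_def, rule_format, of "x + 1"]
      assms(2)[unfolded subgradient_at_def, rule_format, of "x - 1"] by simp_all
  moreover have "\<bar>g (x + 1) - g x\<bar> \<le> L" "\<bar>g (x - 1) - g x\<bar> \<le> L"
    using assms(1)[unfolded lipschitz_with_def, rule_format, of "x + 1" x]
      assms(1)[unfolded lipschitz_with_def, rule_format, of "x - 1" x] by simp_all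
  ultimately show ?thesis by linarith
qed

lemma lipschitz_with_convex_combination:
  assumes "\<And>j. j \<in> S \<Longrightarrow> lipschitz_with L (h j)" "\<And>j. j \<in> S \<Longrightarrow> w j \<ge> 0" "(\<Sum>j\<in>S. w j) = 1"
  shows "lipschitz_with L (\<lambda>s. \<Sum>j\<in>S. w j * h j s)"
  unfolding lipschitz_with_def
proof (intro allI)
  fix a b
  have "\<bar>(\<Sum>j\<in>S. w j * h j a) - (\<Sum>j\<in>S. w j * h j b)\<bar> = \<bar>\<Sum>j\<in>S. w j * (h j a - h j b)\<bar>"
    by (simp add: sum_subtractf right_diff_distrib)
  also have "\<dots> \<le> (\<Sum>j\<in>S. w j * (L * \<bar>a - b\<bar>))"
  proof (rule order_trans[OF sum_abs sum_mono])
    fix j assume "j \<in> S"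
    then show "\<bar>w j * (h j a - h j b)\<bar> \<le> w j * (L * \<bar>a - b\<bar>)"
      using assms(1,2) unfolding lipschitz_with_def by (simp add: abs_mult mult_left_mono)
  qed
  also have "\<dots> = L * \<bar>a - b\<bar>"
    using assms(3) by (simp add: sum_distrib_right[symmetric])
  finally show "\<bar>(\<Sum>j\<in>S. w j * h j a) - (\<Sum>j\<in>S. w j * h j b)\<bar> \<le> L * \<bar>a - b\<bar>" .
qed

lemma abs_sum_mult_le:
  fixes a z :: "'a \<Rightarrow> real"
  assumes "\<And>j. j \<in> S \<Longrightarrow> \<bar>a j\<bar> \<le> c" "\<And>j. j \<in> S \<Longrightarrow> \<bar>z j\<bar> \<le> B"
  shows "\<bar>\<Sum>j\<in>S. a j * z j\<bar> \<le> real (card S) * c * B"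
proof -
  have "\<bar>\<Sum>j\<in>S. a j * z j\<bar> \<le> (\<Sum>j\<in>S. c * B)"
  proof (rule order_trans[OF sum_abs sum_mono])
    fix j assume "j \<in> S"
    with assms show "\<bar>a j * z j\<bar> \<le> c * B"
      unfolding abs_mult by (intro mult_mono) (auto intro: order_trans[OF abs_ge_zero])
  qed
  then show ?thesis by simp
qed

lemma abs_stochastic_sum_le:
  fixes p z :: "'a \<Rightarrow> real"
  assumes "\<And>j. j \<in> S \<Longrightarrow> p j \<ge> 0" "(\<Sum>j\<in>S. p j) = 1" "\<And>j. j \<in> S \<Longrightarrow> \<bar>z j\<bar> \<le> B"
  shows "\<bar>\<Sum>j\<in>S. p j * z j\<bar> \<le> B"
proof -
  have "\<bar>\<Sum>j\<in>S. p j * z j\<bar> \<le> (\<Sum>j\<in>S. p j * B)"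
    by (rule order_trans[OF sum_abs sum_mono]) (use assms in \<open>simp add: abs_mult mult_left_mono\<close>)
  also have "\<dots> = B" using assms(2) by (simp add: sum_distrib_right[symmetric])
  finally show ?thesis .
qed

lemma abs_sum_scaled_le:
  fixes a z b :: "'a \<Rightarrow> real"
  assumes "\<And>r. 0 \<le> a r" "\<And>r. r \<in> R \<Longrightarrow> \<bar>z r\<bar> \<le> b r"
  shows "\<bar>\<Sum>r\<in>R. a r * z r\<bar> \<le> (\<Sum>r\<in>R. a r * b r)"
proof (rule order_trans[OF sum_abs sum_mono])
  fix r assume "r \<in> R"
  then show "\<bar>a r * z r\<bar> \<le> a r * b r"
    using assms by (simp add: abs_mult abs_of_nonneg mult_left_mono)
qed

lemma sum_mprod_0:
  fixes z :: "nat \<Rightarrow> real"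
  assumes "i < m"
  shows "(\<Sum>j<m. mprod M m r 0 i j * z j) = z i"
proof -
  have "(\<Sum>j<m. mprod M m r 0 i j * z j) = (\<Sum>j<m. if i = j then z j else 0)"
    by (intro sum.cong) auto
  then show ?thesis using assms by simp
qed

lemma mprod_Suc_diff:
  assumes "r \<le> t"
  shows "(\<Sum>l<m. M t i l * mprod M m r (t - r) l j) = mprod M m r (Suc t - r) i j"
  using assms by (simp add: Suc_diff_le)

lemma sum_sum_mult_swap:
  fixes z :: "nat \<Rightarrow> real"
  shows "(\<Sum>l<m. c l * (\<Sum>j<m. Q l j * z j)) = (\<Sum>j<m. (\<Sum>l<m. c l * Q l j) * z j)"
  unfolding sum_distrib_left sum_distrib_right mult.assoc by (rule sum.swap)

lemma sum_weighted_sum_mult_swap: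
  fixes z :: "nat \<Rightarrow> nat \<Rightarrow> real"
  shows "(\<Sum>l<m. c l * (\<Sum>r\<in>R. a r * (\<Sum>j<m. Q r l j * z r j)))
       = (\<Sum>r\<in>R. a r * (\<Sum>j<m. (\<Sum>l<m. c l * Q r l j) * z r j))"
proof -
  have "(\<Sum>l<m. c l * (\<Sum>r\<in>R. a r * (\<Sum>j<m. Q r l j * z r j)))
      = (\<Sum>l<m. \<Sum>r\<in>R. c l * (a r * (\<Sum>j<m. Q r l j * z r j)))"
    by (simp only: sum_distrib_left[of "c _"])
  also have "\<dots> = (\<Sum>r\<in>R. \<Sum>l<m. c l * (a r * (\<Sum>j<m. Q r l j * z r j)))"
    by (rule sum.swap)
  also have "\<dots> = (\<Sum>r\<in>R. a r * (\<Sum>l<m. c l * (\<Sum>j<m. Q r l j * z r j)))"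
    by (simp add: sum_distrib_left mult.left_commute)
  finally show ?thesis by (simp only: sum_sum_mult_swap)
qed

lemma unrolled_state:
  assumes x_rec: "\<And>t i. i < m \<Longrightarrow> x (Suc t) i = (\<Sum>j<m. M t i j * x t j) - alpha t * d t i"
    and "i < m"
  shows "x t i = (\<Sum>j<m. mprod M m 0 t i j * x 0 j)
     - (\<Sum>r=1..t. alpha (r - 1) * (\<Sum>j<m. mprod M m r (t - r) i j * d (r - 1) j))"
  using \<open>i < m\<close>
proof (induction t arbitrary: i)
  case 0
  then show ?case using sum_mprod_0[where r = 0 and z = "x 0"] by simp
next
  case (Suc t)
  have "(\<Sum>l<m. M t i l * x t l)
      = (\<Sum>l<m. M t i l * ((\<Sum>j<m. mprod M m 0 t l j * x 0 j)
          - (\<Sum>r=1..t. alpha (r - 1) * (\<Sum>j<m. mprod M m r (t - r) l j * d (r - 1) j))))"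
    using Suc.IH by (intro sum.cong) auto
  also have "\<dots> = (\<Sum>j<m. (\<Sum>l<m. M t i l * mprod M m 0 t l j) * x 0 j)
      - (\<Sum>r=1..t. alpha (r - 1) * (\<Sum>j<m. (\<Sum>l<m. M t i l * mprod M m r (t - r) l j) * d (r - 1) j))"
    by (simp only: right_diff_distrib sum_subtractf sum_sum_mult_swap sum_weighted_sum_mult_swap)
  also have "\<dots> = (\<Sum>j<m. mprod M m 0 (Suc t) i j * x 0 j)
      - (\<Sum>r=1..t. alpha (r - 1) * (\<Sum>j<m. mprod M m r (Suc t - r) i j * d (r - 1) j))"
    using mprod_Suc_diff[of _ t M i m] mprod_Suc_diff[of 0 t M i m] by (simp del: mprod.simps)
  moreover have "(\<Sum>j<m. mprod M m (Suc t) (Suc t - Suc t) i j * d t j) = d t i"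
    using Suc.prems sum_mprod_0[where r = "Suc t" and z = "d t"] by simp
  ultimately show ?case
    using x_rec[OF Suc.prems] by (simp only: sum.cl_ivl_Suc) simp
qed

lemma unrolled_state_Phi:
  assumes x_rec: "\<And>t i. i < m \<Longrightarrow> x (Suc t) i = (\<Sum>j<m. M t i j * x t j) - alpha t * d t i"
    and "i < m" "1 \<le> t"
  shows "x t i = (\<Sum>j<m. Phi M m (t - 1) 0 i j * x 0 j)
     - (\<Sum>r=1..t-1. alpha (r - 1) * (\<Sum>j<m. Phi M m (t - 1) r i j * d (r - 1) j))
     - alpha (t - 1) * d (t - 1) i"
proof -
  obtain s where t: "t = Suc s" using \<open>1 \<le> t\<close> by (cases t) auto
  have "(\<Sum>j<m. mprod M m t (t - t) i j * d s j) = d s i"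
    using \<open>i < m\<close> sum_mprod_0[where r = t and z = "d s"] by simp
  then show ?thesis
    using unrolled_state[where x = x and M = M and alpha = alpha and d = d and t = t, OF x_rec \<open>i < m\<close>]
    unfolding Phi_def t by (simp only: sum.cl_ivl_Suc) (simp del: mprod.simps)
qed

lemma averaged_state_deviation_le:
  fixes pi :: "nat \<Rightarrow> nat \<Rightarrow> real"
  assumes x_rec: "\<And>t i. i < m \<Longrightarrow> x (Suc t) i = (\<Sum>j<m. M t i j * x t j) - alpha t * d t i"
    and i: "i < m" and t: "1 \<le> t"
    and d_bound: "\<And>s j. j < m \<Longrightarrow> \<bar>d s j\<bar> \<le> L"
    and x0_bound: "\<And>j. j < m \<Longrightarrow> \<bar>x 0 j\<bar> \<le> B"
    and alpha_nonneg: "\<And>s. 0 \<le> alpha s"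
    and pi_nonneg: "\<And>j. j < m \<Longrightarrow> 0 \<le> pi t j" and pi_stoch: "(\<Sum>j<m. pi t j) = 1"
    and rate: "\<And>r j. r < t \<Longrightarrow> j < m \<Longrightarrow> \<bar>pi r j - Phi M m (t - 1) r i j\<bar> \<le> c r"
  shows "\<bar>(\<Sum>j<m. pi 0 j * x 0 j) - (\<Sum>r=1..t. alpha (r - 1) * (\<Sum>j<m. pi r j * d (r - 1) j))
            - x t i\<bar>
         \<le> real m * c 0 * B + real m * L * (\<Sum>r=1..t-1. alpha (r - 1) * c r) + 2 * alpha (t - 1) * L"
proof -
  define P where "P r = Phi M m (t - 1) r" for r
  have split_last: "(\<Sum>r=1..t. f r) = (\<Sum>r=1..t-1. f r) + f t" for f :: "nat \<Rightarrow> real"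
    using t by (cases t) (simp_all add: sum.cl_ivl_Suc)
  have "(\<Sum>j<m. pi 0 j * x 0 j) - (\<Sum>r=1..t. alpha (r - 1) * (\<Sum>j<m. pi r j * d (r - 1) j)) - x t i
      = (\<Sum>j<m. (pi 0 j - P 0 i j) * x 0 j)
        - (\<Sum>r=1..t-1. alpha (r - 1) * (\<Sum>j<m. (pi r j - P r i j) * d (r - 1) j))
        - alpha (t - 1) * ((\<Sum>j<m. pi t j * d (t - 1) j) - d (t - 1) i)"
    using unrolled_state_Phi[where x = x and M = M and alpha = alpha and d = d, OF x_rec i t]
    unfolding split_last P_def by (simp add: left_diff_distrib right_diff_distrib sum_subtractf)
  moreover have "\<bar>\<Sum>j<m. (pi 0 j - P 0 i j) * x 0 j\<bar> \<le> real m * c 0 * B"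
    using abs_sum_mult_le[of "{..<m}" _ "c 0" "x 0" B] rate[of 0] x0_bound t unfolding P_def by simp
  moreover have "\<bar>\<Sum>r=1..t-1. alpha (r - 1) * (\<Sum>j<m. (pi r j - P r i j) * d (r - 1) j)\<bar>
      \<le> (\<Sum>r=1..t-1. alpha (r - 1) * (real m * c r * L))"
  proof (rule abs_sum_scaled_le[OF alpha_nonneg])
    fix r assume "r \<in> {1..t-1}"
    then have "r < t" using t by auto
    then show "\<bar>\<Sum>j<m. (pi r j - P r i j) * d (r - 1) j\<bar> \<le> real m * c r * L"
      using abs_sum_mult_le[of "{..<m}" "\<lambda>j. pi r j - P r i j" "c r" "d (r - 1)" L] rate d_bound
      unfolding P_def by simp
  qed
  moreover have "\<bar>alpha (t - 1) * ((\<Sum>j<m. pi t j * d (t - 1) j) - d (t - 1) i)\<bar> \<le> alpha (t - 1) * (2 * L)"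
  proof -
    have "\<bar>\<Sum>j<m. pi t j * d (t - 1) j\<bar> \<le> L"
      using abs_stochastic_sum_le[of "{..<m}" "pi t"] pi_nonneg pi_stoch d_bound by simp
    then have "\<bar>(\<Sum>j<m. pi t j * d (t - 1) j) - d (t - 1) i\<bar> \<le> 2 * L"
      using d_bound[OF i, of "t - 1"] by linarith
    then show ?thesis
      by (simp add: abs_mult abs_of_nonneg[OF alpha_nonneg] mult_left_mono[OF _ alpha_nonneg])
  qed
  ultimately show ?thesis
    by (simp add: sum_distrib_left mult_ac) linarith
qed

theorem lemma6:
  fixes n phi f k m :: nat
    and A :: "nat \<Rightarrow> nat \<Rightarrow> real"
    and h :: "nat \<Rightarrow> real \<Rightarrow> real"
    and g :: "nat \<Rightarrow> real \<Rightarrow> real"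
    and L :: real
    and alpha :: "nat \<Rightarrow> real"
    and x d :: "nat \<Rightarrow> nat \<Rightarrow> real"
    and M :: "nat \<Rightarrow> nat \<Rightarrow> nat \<Rightarrow> real"
    and pi :: "nat \<Rightarrow> nat \<Rightarrow> real"
    and beta gamma :: real
    and tau nu :: nat
    and y :: "nat \<Rightarrow> real"
  assumes phi_le: "phi \<le> f" and phi_lt: "phi < n"
    and m_def: "m = n - phi"
    and A_nonneg: "\<And>j i. j < k \<Longrightarrow> i < n \<Longrightarrow> A j i \<ge> 0"
    and A_col: "\<And>i. i < n \<Longrightarrow> (\<Sum>j<k. A j i) = 1"
    and h_adm: "\<And>j. j < k \<Longrightarrow> admissible L (h j)"
    and g_def: "\<And>i. i < m \<Longrightarrow> g i = (\<lambda>s. \<Sum>j<k. A j i * h j s)"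
    and alpha_nonneg: "\<And>t. alpha t \<ge> 0"
    and alpha_mono: "\<And>t. alpha (Suc t) \<le> alpha t"
    and alpha_div: "\<not> summable alpha"
    and alpha_sq: "summable (\<lambda>t. (alpha t)\<^sup>2)"
    and d_sub: "\<And>t i. i < m \<Longrightarrow> subgradient_at (g i) (x t i) (d t i)"
    and M_nonneg: "\<And>t i j. i < m \<Longrightarrow> j < m \<Longrightarrow> M t i j \<ge> 0"
    and M_stoch: "\<And>t i. i < m \<Longrightarrow> (\<Sum>j<m. M t i j) = 1"
    and x_rec: "\<And>t i. i < m \<Longrightarrow>
                 x (Suc t) i = (\<Sum>j<m. M t i j * x t j) - alpha t * d t i"
    and beta_pos: "0 < beta" and beta_lt1: "beta < 1"
    and tau_pos: "tau \<ge> 1"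
    and nu_def: "nu = tau * m"
    and gamma_def: "gamma = 1 - beta ^ nu"
    and pi_nonneg: "\<And>r j. j < m \<Longrightarrow> pi r j \<ge> 0"
    and pi_stoch: "\<And>r. (\<Sum>j<m. pi r j) = 1"
    and Phi_lim: "\<And>r i j. i < m \<Longrightarrow> j < m \<Longrightarrow>
                   (\<lambda>t. Phi M m t r i j) \<longlonglongrightarrow> pi r j"
    and Phi_rate: "\<And>t r i j. r \<le> t \<Longrightarrow> i < m \<Longrightarrow> j < m \<Longrightarrow>
                   \<bar>Phi M m t r i j - pi r j\<bar>
                     \<le> gamma ^ nat \<lceil>real (t - r + 1) / real nu\<rceil>"
    and y_def: "\<And>t. y t = (\<Sum>j<m. pi 0 j * x 0 j)
                  - (\<Sum>r=1..t. alpha (r - 1) * (\<Sum>j<m. pi r j * d (r - 1) j))"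
  shows "\<forall>i<m. \<forall>t\<ge>1.
           \<bar>y t - x t i\<bar>
             \<le> real m * max \<bar>Min (x 0 ` {..<m})\<bar> \<bar>Max (x 0 ` {..<m})\<bar>
                 * gamma ^ nat \<lceil>real t / real nu\<rceil>
               + real m * L * (\<Sum>r=1..t-1. alpha (r - 1) * gamma ^ nat \<lceil>real (t - r) / real nu\<rceil>)
               + 2 * alpha (t - 1) * L"
proof (intro allI impI)
  fix i t :: nat assume i: "i < m" and t: "1 \<le> t"
  have d_bound: "\<bar>d s j\<bar> \<le> L" if "j < m" for s j
  proof -
    have "lipschitz_with L (g j)"
      unfolding g_def[OF that] using h_adm A_nonneg A_col that m_def
      by (intro lipschitz_with_convex_combination) (auto simp: admissible_def)
    then show ?thesis using subgradient_abs_le_lipschitz d_sub that by blast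
  qed
  define B where "B = max \<bar>Min (x 0 ` {..<m})\<bar> \<bar>Max (x 0 ` {..<m})\<bar>"
  have x0_bound: "\<bar>x 0 j\<bar> \<le> B" if "j < m" for j
  proof -
    have "Min (x 0 ` {..<m}) \<le> x 0 j" "x 0 j \<le> Max (x 0 ` {..<m})" using that by auto
    then show ?thesis unfolding B_def by linarith
  qed
  define c where "c r = gamma ^ nat \<lceil>real (t - r) / real nu\<rceil>" for r
  have rate: "\<bar>pi r j - Phi M m (t - 1) r i j\<bar> \<le> c r" if "r < t" "j < m" for r j
    using Phi_rate[of r "t - 1" i j] i that unfolding c_def
    by (simp add: abs_minus_commute Suc_diff_Suc)
  show "\<bar>y t - x t i\<bar> \<le> real m * max \<bar>Min (x 0 ` {..<m})\<bar> \<bar>Max (x 0 ` {..<m})\<bar>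
        * gamma ^ nat \<lceil>real t / real nu\<rceil>
      + real m * L * (\<Sum>r=1..t-1. alpha (r - 1) * gamma ^ nat \<lceil>real (t - r) / real nu\<rceil>)
      + 2 * alpha (t - 1) * L"
    using averaged_state_deviation_le[OF x_rec i t d_bound x0_bound alpha_nonneg pi_nonneg pi_stoch rate]
    unfolding y_def[symmetric] B_def[symmetric] c_def by (simp add: mult_ac)
qed

end
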